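(* Let $b \ge 1$ be an integer and let $L_{1,b} = \{C_{1,1}, C_{2,1}\} \cup \{C_{1,j} : 1 < j \le b+1\}$, of size $n = b+2$. Then on the $n \times n$ board, $2 \le \mathrm{cp}_{\mathrm{free}}(L_{1,b}) \le 4$.
   Context: For integers $i,j$, $C_{i,j}$ denotes the unit square cell in column $i$ and row $j$ of the integer grid (columns numbered left to right, rows numbered top to bottom). A polyomino is a finite set of cells; its size is its number of cells. For a polyomino $\mathcal{P}$ of size $n$ the board is $\mathbb{B} = \{C_{i,j} : 1 \le i,j \le n\}$. The shift of $\mathcal{P}$ by integers $(c,d)$ is $\mathcal{P}+(c,d) = \{C_{x+c,y+d} : C_{x,y} \in \mathcal{P}\}$. For $0<a\le b$ and $L_{a,b} = \{C_{i,1} : 1 \le i \le a+1\} \cup \{C_{1,j} : 1 < j \le b+1\}$, the rotations by $90^\circ, 180^\circ, 270^\circ$ clockwise are $LR_{a,b} = \{C_{i,1} : 1 \le i \le b+1\} \cup \{C_{b+1,j} : 1 \le j \le a+1\}$, $LR^2_{a,b} = \{C_{i,b+1} : 1 \le i \le a+1\} \cup \{C_{a+1,j} : 1 \le j \le b+1\}$, $LR^3_{a,b} = \{C_{i,a+1} : 1 \le i \le b+1\} \cup \{C_{1,j} : 1 \le j \le a+1\}$ (reflections are not allowed). A free copy of $L_{a,b}$ is any shift of one of these four. A set of polyominoes is a valid arrangement if each is contained in $\mathbb{B}$ and they are pairwise disjoint. A free packing of $\mathcal{P}$ is a set of free copies of $\mathcal{P}$ forming a valid arrangement such that adding any further free copy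 of $\mathcal{P}$ yields an invalid arrangement. The clumsy free packing number $\mathrm{cp}_{\mathrm{free}}(\mathcal{P})$ is the minimum number of polyominoes in a free packing of $\mathcal{P}$ on the $n \times n$ board. *)

theory Defs
  imports Main
begin

text \<open>A cell C_{i,j} (column i, row j) is represented by the pair (i, j) :: int \<times> int.
  A polyomino is a finite set of cells.\<close>

type_synonym cell = "int \<times> int"
type_synonym polyomino = "cell set"

definition board :: "nat \<Rightarrow> polyomino" where
  "board n = {(i, j). 1 \<le> i \<and> i \<le> int n \<and> 1 \<le> j \<and> j \<le> int n}"

definition shift :: "polyomino \<Rightarrow> int \<Rightarrow> int \<Rightarrow> polyomino" where
  "shift P c d = {(x + c, y + d) | x y. (x, y) \<in> P}"

definition Lpoly :: "int \<Rightarrow> int \<Rightarrow> polyomino" where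
  "Lpoly a b = {(i, 1) | i. 1 \<le> i \<and> i \<le> a + 1} \<union> {(1, j) | j. 1 < j \<and> j \<le> b + 1}"

definition LR1 :: "int \<Rightarrow> int \<Rightarrow> polyomino" where
  "LR1 a b = {(i, 1) | i. 1 \<le> i \<and> i \<le> b + 1} \<union> {(b + 1, j) | j. 1 \<le> j \<and> j \<le> a + 1}"

definition LR2 :: "int \<Rightarrow> int \<Rightarrow> polyomino" where
  "LR2 a b = {(i, b + 1) | i. 1 \<le> i \<and> i \<le> a + 1} \<union> {(a + 1, j) | j. 1 \<le> j \<and> j \<le> b + 1}"

definition LR3 :: "int \<Rightarrow> int \<Rightarrow> polyomino" where
  "LR3 a b = {(i, a + 1) | i. 1 \<le> i \<and> i \<le> b + 1} \<union> {(1, j) | j. 1 \<le> j \<and> j \<le> a + 1}"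

text \<open>Free copies of L_{a,b}: shifts of one of its four rotations (no reflections).\<close>
definition free_copies_L :: "int \<Rightarrow> int \<Rightarrow> polyomino set" where
  "free_copies_L a b = {shift R c d | R c d. R \<in> {Lpoly a b, LR1 a b, LR2 a b, LR3 a b}}"

definition valid_arrangement :: "nat \<Rightarrow> polyomino set \<Rightarrow> bool" where
  "valid_arrangement n S \<longleftrightarrow>
     (\<forall>P\<in>S. P \<subseteq> board n) \<and> (\<forall>P\<in>S. \<forall>Q\<in>S. P \<noteq> Q \<longrightarrow> P \<inter> Q = {})"

definition free_packing_L :: "int \<Rightarrow> int \<Rightarrow> polyomino set \<Rightarrow> bool" where
  "free_packing_L a b S \<longleftrightarrow>
     (let n = card (Lpoly a b) in
       S \<subseteq> free_copies_L a b \<and> valid_arrangement n S \<and>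
       (\<forall>Q\<in>free_copies_L a b. Q \<notin> S \<longrightarrow> \<not> valid_arrangement n (insert Q S)))"

definition cp_free_L :: "int \<Rightarrow> int \<Rightarrow> nat" where
  "cp_free_L a b = (LEAST k. \<exists>S. free_packing_L a b S \<and> card S = k)"

end

theory Submission
  imports Defs
begin

text \<open>
  Lower bound: no single copy blocks every other one, because each copy on the board is
  disjoint from one of four fixed copies sitting in the corners of the board.

  Upper bound: every copy contains a straight bar of \<open>b + 1\<close> cells, which on a board of
  side \<open>b + 2\<close> must reach the border. For \<open>b \<ge> 2\<close> four disjoint copies, one along each
  side, cover the whole border and hence block every further copy. For \<open>b = 1\<close> two copies
  leave free only the anti-diagonal of the \<open>3 \<times> 3\<close> board, which contains no horizontal
  domino, whereas every copy does.
\<close>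

lemma mem_shift: "(x, y) \<in> shift P c d \<longleftrightarrow> (x - c, y - d) \<in> P"
  unfolding shift_def by force

lemma mem_Lpoly: "(x, y) \<in> Lpoly a b \<longleftrightarrow> y = 1 \<and> 1 \<le> x \<and> x \<le> a + 1 \<or> x = 1 \<and> 1 < y \<and> y \<le> b + 1"
  unfolding Lpoly_def by auto

lemma mem_LR1: "(x, y) \<in> LR1 a b \<longleftrightarrow> y = 1 \<and> 1 \<le> x \<and> x \<le> b + 1 \<or> x = b + 1 \<and> 1 \<le> y \<and> y \<le> a + 1"
  unfolding LR1_def by auto

lemma mem_LR2: "(x, y) \<in> LR2 a b \<longleftrightarrow> y = b + 1 \<and> 1 \<le> x \<and> x \<le> a + 1 \<or> x = a + 1 \<and> 1 \<le> y \<and> y \<le> b + 1"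
  unfolding LR2_def by auto

lemma mem_LR3: "(x, y) \<in> LR3 a b \<longleftrightarrow> y = a + 1 \<and> 1 \<le> x \<and> x \<le> b + 1 \<or> x = 1 \<and> 1 \<le> y \<and> y \<le> a + 1"
  unfolding LR3_def by auto

lemmas mem_free_L = mem_shift mem_Lpoly mem_LR1 mem_LR2 mem_LR3

lemma mem_board: "(x, y) \<in> board n \<longleftrightarrow> 1 \<le> x \<and> x \<le> int n \<and> 1 \<le> y \<and> y \<le> int n"
  unfolding board_def by simp

lemma card_Lpoly:
  assumes "0 \<le> a" "0 \<le> b"
  shows "card (Lpoly a b) = nat (a + b + 1)"
proof -
  let ?row = "(\<lambda>i. (i, 1::int)) ` {1..a + 1}" and ?col = "(\<lambda>j. (1::int, j)) ` {2..b + 1}"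
  have "Lpoly a b = ?row \<union> ?col"
    by (auto simp: mem_Lpoly)
  also have "card \<dots> = card ?row + card ?col"
    by (rule card_Un_disjoint) auto
  also have "\<dots> = nat (a + 1) + nat b"
    by (simp add: card_image inj_on_def)
  finally show ?thesis
    using assms by simp
qed

lemma finite_board: "finite (board n)"
proof -
  have "board n = {1..int n} \<times> {1..int n}"
    unfolding board_def by auto
  then show ?thesis
    by simp
qed

lemma finite_valid_arrangement:
  assumes "valid_arrangement n S"
  shows "finite S"
proof (rule finite_subset)
  show "S \<subseteq> Pow (board n)"
    using assms unfolding valid_arrangement_def by blast
  show "finite (Pow (board n))"
    by (simp add: finite_board)
qed

lemma valid_arrangement_insert:
  assumes "Q \<notin> S"
  shows "valid_arrangement n (insert Q S) \<longleftrightarrow>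
    valid_arrangement n S \<and> Q \<subseteq> board n \<and> (\<forall>P\<in>S. P \<inter> Q = {})"
  unfolding valid_arrangement_def using assms by (smt (verit) Int_commute insert_iff)

lemma free_packing_L_iff:
  "free_packing_L a b S \<longleftrightarrow>
    S \<subseteq> free_copies_L a b \<and> valid_arrangement (card (Lpoly a b)) S \<and>
    (\<forall>Q\<in>free_copies_L a b. Q \<subseteq> board (card (Lpoly a b)) \<longrightarrow> Q \<in> S \<or> (\<exists>P\<in>S. P \<inter> Q \<noteq> {}))"
  unfolding free_packing_L_def Let_def by (auto simp: valid_arrangement_insert)

lemma shift_in_free_copies_L:
  "R \<in> {Lpoly a b, LR1 a b, LR2 a b, LR3 a b} \<Longrightarrow> shift R c d \<in> free_copies_L a b"
  unfolding free_copies_L_def by blast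

lemma free_copies_LE:
  assumes "P \<in> free_copies_L a b"
  obtains c d where "P = shift (Lpoly a b) c d" | c d where "P = shift (LR1 a b) c d"
    | c d where "P = shift (LR2 a b) c d" | c d where "P = shift (LR3 a b) c d"
  using assms unfolding free_copies_L_def by blast

lemma free_copy_nonempty:
  assumes "0 \<le> a" "0 \<le> b" "P \<in> free_copies_L a b"
  shows "P \<noteq> {}"
  using assms(3)
proof (cases rule: free_copies_LE)
  case (1 c d)
  then have "(c + 1, d + 1) \<in> P" using assms by (simp add: mem_free_L)
  then show ?thesis by blast
next
  case (2 c d)
  then have "(c + 1, d + 1) \<in> P" using assms by (simp add: mem_free_L)
  then show ?thesis by blast
next
  case (3 c d)
  then have "(c + a + 1, d + 1) \<in> P" using assms by (simp add: mem_free_L)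
  then show ?thesis by blast
next
  case (4 c d)
  then have "(c + 1, d + 1) \<in> P" using assms by (simp add: mem_free_L)
  then show ?thesis by blast
qed

definition corner_copies :: "int \<Rightarrow> polyomino set" where
  "corner_copies b = {shift (Lpoly 1 b) 0 0, shift (LR1 1 b) 1 0, shift (LR2 1 b) b 1, shift (LR3 1 b) 0 b}"

lemma corner_copies_subset_free_copies: "corner_copies b \<subseteq> free_copies_L 1 b"
  unfolding corner_copies_def by (auto intro: shift_in_free_copies_L)

lemma corner_copies_on_board: "1 \<le> b \<Longrightarrow> Q \<in> corner_copies b \<Longrightarrow> Q \<subseteq> board (nat (b + 2))"
  unfolding corner_copies_def by (auto simp: mem_free_L mem_board)

lemma shift_Lpoly_misses_corner_copy:
  assumes "1 \<le> b" "0 \<le> c" "c \<le> b" "0 \<le> d" "d \<le> 1"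
  shows "\<exists>Q\<in>corner_copies b. shift (Lpoly 1 b) c d \<inter> Q = {}"
proof (cases "c = b \<and> d = 1")
  case True
  then have "shift (Lpoly 1 b) c d \<inter> shift (Lpoly 1 b) 0 0 = {}"
    using assms by (auto simp: disjoint_iff mem_free_L)
  then show ?thesis by (auto simp: corner_copies_def)
next
  case False
  then have "shift (Lpoly 1 b) c d \<inter> shift (LR2 1 b) b 1 = {}"
    using assms by (auto simp: disjoint_iff mem_free_L)
  then show ?thesis by (auto simp: corner_copies_def)
qed

lemma shift_LR1_misses_corner_copy:
  assumes "1 \<le> b" "0 \<le> c" "c \<le> 1" "0 \<le> d" "d \<le> b"
  shows "\<exists>Q\<in>corner_copies b. shift (LR1 1 b) c d \<inter> Q = {}"
proof -
  consider "c = 0" "d = b" | "c = 1" | "c = 0" "d < b"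
    using assms by linarith
  then show ?thesis
  proof cases
    case 1
    then have "shift (LR1 1 b) c d \<inter> shift (LR1 1 b) 1 0 = {}"
      using assms by (auto simp: disjoint_iff mem_free_L)
    then show ?thesis by (auto simp: corner_copies_def)
  next
    case 2
    then have "shift (LR1 1 b) c d \<inter> shift (LR3 1 b) 0 b = {}"
      using assms by (auto simp: disjoint_iff mem_free_L)
    then show ?thesis by (auto simp: corner_copies_def)
  next
    case 3
    then have "shift (LR1 1 b) c d \<inter> shift (LR2 1 b) b 1 = {}"
      using assms by (auto simp: disjoint_iff mem_free_L)
    then show ?thesis by (auto simp: corner_copies_def)
  qed
qed

lemma shift_LR2_misses_corner_copy:
  assumes "1 \<le> b" "0 \<le> c" "c \<le> b" "0 \<le> d" "d \<le> 1"
  shows "\<exists>Q\<in>corner_copies b. shift (LR2 1 b) c d \<inter> Q = {}"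
proof (cases "c = 0 \<and> d = 0")
  case True
  then have "shift (LR2 1 b) c d \<inter> shift (LR2 1 b) b 1 = {}"
    using assms by (auto simp: disjoint_iff mem_free_L)
  then show ?thesis by (auto simp: corner_copies_def)
next
  case False
  then have "shift (LR2 1 b) c d \<inter> shift (Lpoly 1 b) 0 0 = {}"
    using assms by (auto simp: disjoint_iff mem_free_L)
  then show ?thesis by (auto simp: corner_copies_def)
qed

lemma shift_LR3_misses_corner_copy:
  assumes "1 \<le> b" "0 \<le> c" "c \<le> 1" "0 \<le> d" "d \<le> b"
  shows "\<exists>Q\<in>corner_copies b. shift (LR3 1 b) c d \<inter> Q = {}"
proof (cases "c = 1 \<and> d = 0")
  case True
  then have "shift (LR3 1 b) c d \<inter> shift (LR3 1 b) 0 b = {}"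
    using assms by (auto simp: disjoint_iff mem_free_L)
  then show ?thesis by (auto simp: corner_copies_def)
next
  case False
  then have "shift (LR3 1 b) c d \<inter> shift (LR1 1 b) 1 0 = {}"
    using assms by (auto simp: disjoint_iff mem_free_L)
  then show ?thesis by (auto simp: corner_copies_def)
qed

lemma free_copy_misses_corner_copy:
  assumes b: "1 \<le> b" and P: "P \<in> free_copies_L 1 b" and on_board: "P \<subseteq> board (nat (b + 2))"
  shows "\<exists>Q\<in>corner_copies b. P \<inter> Q = {}"
proof -
  have cell: "1 \<le> x \<and> x \<le> b + 2 \<and> 1 \<le> y \<and> y \<le> b + 2" if "(x, y) \<in> P" for x y
    using on_board that b by (auto simp: mem_board)
  from P show ?thesis
  proof (cases rule: free_copies_LE)
    case (1 c d)
    then have "(c + 1, d + 1) \<in> P" "(c + 2, d + 1) \<in> P" "(c + 1, d + b + 1) \<in> P"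
      using b by (simp_all add: mem_free_L)
    then have "0 \<le> c" "c \<le> b" "0 \<le> d" "d \<le> 1"
      by (auto dest!: cell)
    with b show ?thesis
      unfolding 1 by (rule shift_Lpoly_misses_corner_copy)
  next
    case (2 c d)
    then have "(c + 1, d + 1) \<in> P" "(c + b + 1, d + 1) \<in> P" "(c + b + 1, d + 2) \<in> P"
      using b by (simp_all add: mem_free_L)
    then have "0 \<le> c" "c \<le> 1" "0 \<le> d" "d \<le> b"
      by (auto dest!: cell)
    with b show ?thesis
      unfolding 2 by (rule shift_LR1_misses_corner_copy)
  next
    case (3 c d)
    then have "(c + 1, d + b + 1) \<in> P" "(c + 2, d + 1) \<in> P" "(c + 2, d + b + 1) \<in> P"
      using b by (simp_all add: mem_free_L)
    then have "0 \<le> c" "c \<le> b" "0 \<le> d" "d \<le> 1"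
      by (auto dest!: cell)
    with b show ?thesis
      unfolding 3 by (rule shift_LR2_misses_corner_copy)
  next
    case (4 c d)
    then have "(c + 1, d + 1) \<in> P" "(c + 1, d + 2) \<in> P" "(c + b + 1, d + 2) \<in> P"
      using b by (simp_all add: mem_free_L)
    then have "0 \<le> c" "c \<le> 1" "0 \<le> d" "d \<le> b"
      by (auto dest!: cell)
    with b show ?thesis
      unfolding 4 by (rule shift_LR3_misses_corner_copy)
  qed
qed

lemma two_le_card_free_packing_L:
  assumes b: "1 \<le> b" and packing: "free_packing_L 1 b S"
  shows "2 \<le> card S"
proof -
  have n: "card (Lpoly 1 b) = nat (b + 2)"
    using b by (simp add: card_Lpoly add.commute)
  have copies: "S \<subseteq> free_copies_L 1 b" and valid: "valid_arrangement (nat (b + 2)) S"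
    and blocked: "\<And>Q. Q \<in> free_copies_L 1 b \<Longrightarrow> Q \<subseteq> board (nat (b + 2)) \<Longrightarrow> Q \<in> S \<or> (\<exists>P\<in>S. P \<inter> Q \<noteq> {})"
    using packing unfolding free_packing_L_iff n by blast+
  have nonempty: "S \<noteq> {}"
  proof -
    have "shift (Lpoly 1 b) 0 0 \<in> free_copies_L 1 b"
      by (simp add: shift_in_free_copies_L)
    moreover have "shift (Lpoly 1 b) 0 0 \<subseteq> board (nat (b + 2))"
      using b by (auto simp: mem_free_L mem_board)
    ultimately show ?thesis
      using blocked by blast
  qed
  have not_singleton: "S \<noteq> {P}" for P
  proof
    assume S: "S = {P}"
    then have "P \<in> free_copies_L 1 b" "P \<subseteq> board (nat (b + 2))"
      using copies valid by (auto simp: valid_arrangement_def)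
    then obtain Q where Q: "Q \<in> corner_copies b" "P \<inter> Q = {}"
      using free_copy_misses_corner_copy b by blast
    have "Q \<in> free_copies_L 1 b" "Q \<subseteq> board (nat (b + 2))"
      using Q(1) b corner_copies_subset_free_copies corner_copies_on_board by blast+
    moreover have "Q \<noteq> P"
      using Q(2) free_copy_nonempty[of 1 b Q] \<open>Q \<in> free_copies_L 1 b\<close> b by auto
    ultimately show False
      using blocked Q(2) S by blast
  qed
  have "card S \<noteq> 0"
    using nonempty finite_valid_arrangement[OF valid] by simp
  moreover have "card S \<noteq> 1"
  proof
    assume "card S = 1"
    then obtain P where "S = {P}"
      by (rule card_1_singletonE)
    with not_singleton show False by blast
  qed
  ultimately show ?thesis
    by linarith
qed

lemma free_copy_contains_bar:
  assumes "0 \<le> a" "0 \<le> b" "Q \<in> free_copies_L a b"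
  shows "\<exists>x y. (x, y) \<in> Q \<and> ((x, y + b) \<in> Q \<or> (x + b, y) \<in> Q)"
  using assms(3)
proof (cases rule: free_copies_LE)
  case (1 c d)
  then have "(c + 1, d + 1) \<in> Q \<and> (c + 1, d + 1 + b) \<in> Q"
    using assms by (auto simp: mem_free_L)
  then show ?thesis by blast
next
  case (2 c d)
  then have "(c + 1, d + 1) \<in> Q \<and> (c + 1 + b, d + 1) \<in> Q"
    using assms by (simp add: mem_free_L)
  then show ?thesis by blast
next
  case (3 c d)
  then have "(c + a + 1, d + 1) \<in> Q \<and> (c + a + 1, d + 1 + b) \<in> Q"
    using assms by (simp add: mem_free_L)
  then show ?thesis by blast
next
  case (4 c d)
  then have "(c + 1, d + a + 1) \<in> Q \<and> (c + 1 + b, d + a + 1) \<in> Q"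
    using assms by (simp add: mem_free_L)
  then show ?thesis by blast
qed

lemma free_copy_meets_border:
  assumes "0 \<le> a" "0 \<le> b" "Q \<in> free_copies_L a b" and on_board: "Q \<subseteq> board (nat (b + 2))"
  shows "\<exists>x y. (x, y) \<in> Q \<and> (x = 1 \<or> x = b + 2 \<or> y = 1 \<or> y = b + 2)"
proof -
  have cell: "1 \<le> x \<and> x \<le> b + 2 \<and> 1 \<le> y \<and> y \<le> b + 2" if "(x, y) \<in> Q" for x y
    using on_board that assms(2) by (auto simp: mem_board)
  obtain x y where start: "(x, y) \<in> Q" and bar: "(x, y + b) \<in> Q \<or> (x + b, y) \<in> Q"
    using free_copy_contains_bar assms by blast
  from bar show ?thesis
  proof
    assume top: "(x, y + b) \<in> Q"
    have "y = 1 \<or> y + b = b + 2"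
      using cell[OF start] cell[OF top] by linarith
    then show ?thesis
      using start top by blast
  next
    assume right: "(x + b, y) \<in> Q"
    have "x = 1 \<or> x + b = b + 2"
      using cell[OF start] cell[OF right] by linarith
    then show ?thesis
      using start right by blast
  qed
qed

lemma free_copy_contains_horizontal_domino:
  assumes "1 \<le> a" "1 \<le> b" "Q \<in> free_copies_L a b"
  shows "\<exists>x y. (x, y) \<in> Q \<and> (x + 1, y) \<in> Q"
  using assms(3)
proof (cases rule: free_copies_LE)
  case (1 c d)
  then have "(c + 1, d + 1) \<in> Q \<and> (c + 1 + 1, d + 1) \<in> Q"
    using assms by (simp add: mem_free_L)
  then show ?thesis by blast
next
  case (2 c d)
  then have "(c + 1, d + 1) \<in> Q \<and> (c + 1 + 1, d + 1) \<in> Q"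
    using assms by (simp add: mem_free_L)
  then show ?thesis by blast
next
  case (3 c d)
  then have "(c + 1, d + b + 1) \<in> Q \<and> (c + 1 + 1, d + b + 1) \<in> Q"
    using assms by (simp add: mem_free_L)
  then show ?thesis by blast
next
  case (4 c d)
  then have "(c + 1, d + a + 1) \<in> Q \<and> (c + 1 + 1, d + a + 1) \<in> Q"
    using assms by (simp add: mem_free_L)
  then show ?thesis by blast
qed

definition pinwheel :: "int \<Rightarrow> polyomino set" where
  "pinwheel b = {shift (Lpoly 1 b) 0 1, shift (LR2 1 b) b 0, shift (LR1 1 b) 0 0, shift (LR3 1 b) 1 b}"

lemma card_pinwheel: "card (pinwheel b) \<le> 4"
  unfolding pinwheel_def by (auto simp: card_insert_if)

lemma pinwheel_covers_border:
  assumes b: "2 \<le> b" and on_board: "(x, y) \<in> board (nat (b + 2))"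
    and border: "x = 1 \<or> x = b + 2 \<or> y = 1 \<or> y = b + 2"
  shows "\<exists>P\<in>pinwheel b. (x, y) \<in> P"
proof -
  have bounds: "1 \<le> x" "x \<le> b + 2" "1 \<le> y" "y \<le> b + 2"
    using on_board b by (auto simp: mem_board)
  consider "x = 1" "2 \<le> y" | "x = b + 2" "y \<le> b + 1" | "y = 1" "x \<le> b + 1" | "y = b + 2" "2 \<le> x"
    using border bounds b by fastforce
  then show ?thesis
  proof cases
    case 1
    then have "(x, y) \<in> shift (Lpoly 1 b) 0 1"
      using bounds by (auto simp: mem_free_L)
    then show ?thesis
      unfolding pinwheel_def by blast
  next
    case 2
    then have "(x, y) \<in> shift (LR2 1 b) b 0"
      using bounds by (simp add: mem_free_L)
    then show ?thesis
      unfolding pinwheel_def by blast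
  next
    case 3
    then have "(x, y) \<in> shift (LR1 1 b) 0 0"
      using bounds by (simp add: mem_free_L)
    then show ?thesis
      unfolding pinwheel_def by blast
  next
    case 4
    then have "(x, y) \<in> shift (LR3 1 b) 1 b"
      using bounds by (simp add: mem_free_L)
    then show ?thesis
      unfolding pinwheel_def by blast
  qed
qed

lemma free_packing_pinwheel:
  assumes b: "2 \<le> b"
  shows "free_packing_L 1 b (pinwheel b)"
proof -
  have n: "card (Lpoly 1 b) = nat (b + 2)"
    using b by (simp add: card_Lpoly add.commute)
  have "pinwheel b \<subseteq> free_copies_L 1 b"
    unfolding pinwheel_def by (auto intro: shift_in_free_copies_L)
  moreover have "valid_arrangement (nat (b + 2)) (pinwheel b)"
    unfolding valid_arrangement_def pinwheel_def disjoint_iff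
    using b by (auto simp: mem_free_L mem_board)
  moreover have "\<exists>P\<in>pinwheel b. P \<inter> Q \<noteq> {}"
    if Q: "Q \<in> free_copies_L 1 b" "Q \<subseteq> board (nat (b + 2))" for Q
  proof -
    obtain x y where "(x, y) \<in> Q" "x = 1 \<or> x = b + 2 \<or> y = 1 \<or> y = b + 2"
      using free_copy_meets_border[of 1 b Q] Q b by auto
    moreover from this have "\<exists>P\<in>pinwheel b. (x, y) \<in> P"
      using pinwheel_covers_border b Q(2) by blast
    ultimately show ?thesis
      by blast
  qed
  ultimately show ?thesis
    unfolding free_packing_L_iff n by blast
qed

lemma free_packing_L_1_1: "free_packing_L 1 1 {shift (Lpoly 1 1) 0 0, shift (LR2 1 1) 1 1}"
  (is "free_packing_L 1 1 {?A, ?B}")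
proof -
  have n: "card (Lpoly 1 1) = 3"
    by (simp add: card_Lpoly)
  have uncovered: "x + y = 4" if "(x, y) \<in> board 3" "(x, y) \<notin> ?A" "(x, y) \<notin> ?B" for x y
    using that unfolding mem_free_L mem_board by simp presburger
  have "{?A, ?B} \<subseteq> free_copies_L 1 1"
    by (auto intro: shift_in_free_copies_L)
  moreover have "valid_arrangement 3 {?A, ?B}"
    unfolding valid_arrangement_def disjoint_iff by (auto simp: mem_free_L mem_board)
  moreover have "\<exists>P\<in>{?A, ?B}. P \<inter> Q \<noteq> {}"
    if Q: "Q \<in> free_copies_L 1 1" "Q \<subseteq> board 3" for Q
  proof (rule ccontr)
    assume "\<not> (\<exists>P\<in>{?A, ?B}. P \<inter> Q \<noteq> {})"
    then have free: "z \<notin> ?A" "z \<notin> ?B" if "z \<in> Q" for z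
      using that by blast+
    obtain x y where "(x, y) \<in> Q" "(x + 1, y) \<in> Q"
      using free_copy_contains_horizontal_domino[of 1 1 Q] Q(1) by auto
    with Q(2) free have "x + y = 4" "(x + 1) + y = 4"
      using uncovered[of x y] uncovered[of "x + 1" y] by auto
    then show False
      by simp
  qed
  ultimately show ?thesis
    unfolding free_packing_L_iff n by blast
qed

lemma ex_free_packing_L_card_le_4:
  assumes "1 \<le> b"
  shows "\<exists>S. free_packing_L 1 b S \<and> card S \<le> 4"
proof (cases "b = 1")
  case True
  have "card {shift (Lpoly 1 1) 0 0, shift (LR2 1 1) 1 1} \<le> 4"
    by (simp add: card_insert_if)
  with True show ?thesis
    using free_packing_L_1_1 by blast
next
  case False
  with assms have "2 \<le> b"
    by simp
  then show ?thesis
    using free_packing_pinwheel card_pinwheel by blast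
qed

theorem corollary1:
  fixes b :: int
  assumes "b \<ge> 1"
  shows "2 \<le> cp_free_L 1 b \<and> cp_free_L 1 b \<le> 4"
proof -
  obtain S where S: "free_packing_L 1 b S" "card S \<le> 4"
    using ex_free_packing_L_card_le_4 assms by blast
  then have "cp_free_L 1 b \<le> card S"
    unfolding cp_free_L_def by (blast intro: Least_le)
  moreover obtain S' where "free_packing_L 1 b S'" "card S' = cp_free_L 1 b"
    using LeastI_ex[of "\<lambda>k. \<exists>S. free_packing_L 1 b S \<and> card S = k"] S
    unfolding cp_free_L_def by blast
  then have "2 \<le> cp_free_L 1 b"
    using two_le_card_free_packing_L assms by metis
  ultimately show ?thesis
    using S(2) by linarith
qed

end
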